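(* Let $n\ge2$ and $\delta>0$. For $i\in\{1,2\}$ and $j\in\{1,\dots,n\}$ let $z_j^{(i)}\in\mathbb{R}$ be the standardized samples defined in the context, let $\tilde z_j^{(i)}\in\delta\mathbb{Z}$ be a nearest integer multiple of $\delta$ to $z_j^{(i)}$ (so $|z_j^{(i)}-\tilde z_j^{(i)}|\le\delta/2$), and let $r=\frac{1}{n-1}\sum_{j=1}^n z_j^{(1)}z_j^{(2)}$ and $\tilde r=\frac{1}{n-1}\sum_{j=1}^n\tilde z_j^{(1)}\tilde z_j^{(2)}$. If $R\in\mathbb{R}$ satisfies $|\tilde z_j^{(i)}|\le R$ for all $i\in\{1,2\}$ and $j\in\{1,\dots,n\}$, then $$|r-\tilde r|\le\frac{n\delta}{n-1}\left(R+\frac{\delta}{4}\right).$$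
   Context: For $i=1,2$, $x_1^{(i)},\dots,x_n^{(i)}$ are real samples (not all equal), $\bar x^{(i)}$ is their mean, $s^{(i)}=\sqrt{\frac{1}{n-1}\sum_{j=1}^n(x_j^{(i)}-\bar x^{(i)})^2}$, and $z_j^{(i)}=(x_j^{(i)}-\bar x^{(i)})/s^{(i)}$; thus $r$ is the sample Pearson correlation of the two sample sequences. (In the paper, $\tilde z_j^{(i)}$ is the nearest element of the fixed-point set $\{x\delta: x\in\mathbb{Z}, |x|\le M\}$ for some $M\in\mathbb{N}$; the bound does not depend on $M$.) *)

theory Defs
  imports "HOL-Analysis.Analysis"
begin

definition smean :: "nat \<Rightarrow> (nat \<Rightarrow> real) \<Rightarrow> real" where
  "smean n x = (\<Sum>j=1..n. x j) / real n"

definition ssd :: "nat \<Rightarrow> (nat \<Rightarrow> real) \<Rightarrow> real" where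
  "ssd n x = sqrt ((\<Sum>j=1..n. (x j - smean n x)^2) / (real n - 1))"

definition zstd :: "nat \<Rightarrow> (nat \<Rightarrow> real) \<Rightarrow> nat \<Rightarrow> real" where
  "zstd n x j = (x j - smean n x) / ssd n x"

definition nearest_mult :: "real \<Rightarrow> real \<Rightarrow> real \<Rightarrow> bool" where
  "nearest_mult \<delta> z zt \<longleftrightarrow> (\<exists>k::int. zt = \<delta> * of_int k) \<and>
     (\<forall>m::int. \<bar>z - zt\<bar> \<le> \<bar>z - \<delta> * of_int m\<bar>)"

end

theory Submission
  imports Defs
begin

text \<open>Rounding each standardized sample to a nearest multiple of \<open>\<delta>\<close> moves it by at most
  \<open>\<delta>/2\<close>, so each product of paired samples moves by at most
  \<open>(\<delta>/2) R + R (\<delta>/2) + (\<delta>/2)\<^sup>2 = \<delta> (R + \<delta>/4)\<close>; summing over the \<open>n\<close> pairs and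
  dividing by \<open>n - 1\<close> gives the bound.\<close>

lemma nearest_mult_dist_le:
  fixes \<delta> z zt :: real
  assumes "\<delta> > 0" and "nearest_mult \<delta> z zt"
  shows "\<bar>z - zt\<bar> \<le> \<delta> / 2"
proof -
  define m where "m = \<lfloor>z / \<delta> + 1 / 2\<rfloor>"
  have "\<bar>z / \<delta> - of_int m\<bar> \<le> 1 / 2"
    unfolding m_def by linarith
  then have "\<bar>z - \<delta> * of_int m\<bar> \<le> \<delta> / 2"
    using \<open>\<delta> > 0\<close> by (simp add: field_simps abs_le_iff)
  moreover have "\<bar>z - zt\<bar> \<le> \<bar>z - \<delta> * of_int m\<bar>"
    using assms(2) unfolding nearest_mult_def by blast
  ultimately show ?thesis by linarith
qed

lemma abs_mult_diff_le:
  fixes a b a' b' d e A B :: "'a :: linordered_idom"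
  assumes "\<bar>a - a'\<bar> \<le> d" "\<bar>b - b'\<bar> \<le> e" "\<bar>a'\<bar> \<le> A" "\<bar>b'\<bar> \<le> B"
  shows "\<bar>a * b - a' * b'\<bar> \<le> d * B + A * e + d * e"
proof -
  have "a * b - a' * b' = (a - a') * b' + a' * (b - b') + (a - a') * (b - b')"
    by (simp add: algebra_simps)
  also have "\<bar>\<dots>\<bar> \<le> \<bar>(a - a') * b'\<bar> + \<bar>a' * (b - b')\<bar> + \<bar>(a - a') * (b - b')\<bar>"
    by (meson abs_triangle_ineq add_right_mono order_trans)
  also have "\<dots> = \<bar>a - a'\<bar> * \<bar>b'\<bar> + \<bar>a'\<bar> * \<bar>b - b'\<bar> + \<bar>a - a'\<bar> * \<bar>b - b'\<bar>"
    by (simp add: abs_mult)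
  also have "\<dots> \<le> d * B + A * e + d * e"
    using assms by (intro add_mono mult_mono) auto
  finally show ?thesis .
qed

lemma abs_sum_diff_le_card_mult:
  fixes f g :: "'b \<Rightarrow> 'a :: linordered_idom"
  assumes "\<And>j. j \<in> J \<Longrightarrow> \<bar>f j - g j\<bar> \<le> c"
  shows "\<bar>sum f J - sum g J\<bar> \<le> of_nat (card J) * c"
proof -
  have "\<bar>sum f J - sum g J\<bar> \<le> (\<Sum>j\<in>J. \<bar>f j - g j\<bar>)"
    by (metis sum_abs sum_subtractf)
  also have "\<dots> \<le> of_nat (card J) * c"
    using assms by (rule sum_bounded_above)
  finally show ?thesis .
qed

theorem lemma2:
  fixes n :: nat and \<delta> R :: real
    and x :: "nat \<Rightarrow> nat \<Rightarrow> real" and zt :: "nat \<Rightarrow> nat \<Rightarrow> real"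
  assumes "n \<ge> 2" and "\<delta> > 0"
    and not_const: "\<And>i. i \<in> {1,2} \<Longrightarrow> \<exists>j\<in>{1..n}. \<exists>k\<in>{1..n}. x i j \<noteq> x i k"
    and near: "\<And>i j. i \<in> {1,2} \<Longrightarrow> j \<in> {1..n} \<Longrightarrow> nearest_mult \<delta> (zstd n (x i) j) (zt i j)"
    and bound: "\<And>i j. i \<in> {1,2} \<Longrightarrow> j \<in> {1..n} \<Longrightarrow> \<bar>zt i j\<bar> \<le> R"
  shows "\<bar>(\<Sum>j=1..n. zstd n (x 1) j * zstd n (x 2) j) / (real n - 1)
          - (\<Sum>j=1..n. zt 1 j * zt 2 j) / (real n - 1)\<bar>
         \<le> real n * \<delta> / (real n - 1) * (R + \<delta> / 4)"
proof -
  have term_err: "\<bar>zstd n (x 1) j * zstd n (x 2) j - zt 1 j * zt 2 j\<bar> \<le> \<delta> * (R + \<delta> / 4)"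
    if "j \<in> {1..n}" for j
  proof -
    have "\<bar>zstd n (x 1) j * zstd n (x 2) j - zt 1 j * zt 2 j\<bar>
        \<le> \<delta> / 2 * R + R * (\<delta> / 2) + \<delta> / 2 * (\<delta> / 2)"
      using that nearest_mult_dist_le[OF \<open>\<delta> > 0\<close>] near bound by (intro abs_mult_diff_le) auto
    then show ?thesis by (simp add: algebra_simps)
  qed
  have "\<bar>(\<Sum>j=1..n. zstd n (x 1) j * zstd n (x 2) j) - (\<Sum>j=1..n. zt 1 j * zt 2 j)\<bar>
      \<le> real (card {1..n}) * (\<delta> * (R + \<delta> / 4))"
    by (rule abs_sum_diff_le_card_mult) (rule term_err)
  moreover have "real n - 1 > 0"
    using \<open>n \<ge> 2\<close> by simp
  ultimately show ?thesis
    by (simp add: diff_divide_distrib[symmetric] divide_right_mono)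
qed

end
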